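(* Let $I$ and $J$ be intervals of $B$. - If $I,J\in\mathcal{L}$, then $\mathrm{Hom}_B(k_I,k_J)\ne0$ if and only if $J\subseteq I$. - If $I,J\in\mathcal{R}$, then $\mathrm{Hom}_B(k_I,k_J)\ne0$ if and only if $I\subseteq J$.
   Context: Let $k$ be a field. The bipath poset $B$ has underlying set $(\mathbb{R}\times\{1,2\})\sqcup\{-\infty,+\infty\}$. Its order is: $x\le y$ iff $x=-\infty$, or $y=+\infty$, or $x=(s,i)$, $y=(t,i)$ with the same $i$ and $s\le t$. $B$-persistence modules are functors from $B$ (as a category) to $k$-vector spaces; $\mathrm{Hom}_B$ denotes natural transformations. An interval of $B$ is a nonempty convex and connected subset (convex: $p,q\in I$, $p\le r\le q$ imply $r\in I$; connected: any two elements are joined by a finite sequence in $I$ with consecutive ones comparable). The interval module $k_I$ is $k$ on $I$ and $0$ elsewhere, with identity maps within $I$ and zero maps otherwise. $\mathcal{L}$ is the set of intervals $\neq B$ containing $-\infty$; $\mathcal{R}$ is the set of intervals $\neq B$ containing $+\infty$. *)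

theory Defs
  imports Complex_Main
begin

text \<open>The bipath poset B = (R x {1,2}) + {-inf, +inf}. Pt s i with i :: bidx
  (One, Two) models the element (s,i).\<close>

datatype bidx = One | Two

datatype bip = NegInf | PosInf | Pt real bidx

definition bip_le :: "bip \<Rightarrow> bip \<Rightarrow> bool" where
  "bip_le x y \<longleftrightarrow> x = NegInf \<or> y = PosInf \<or>
     (\<exists>s t i. x = Pt s i \<and> y = Pt t i \<and> s \<le> t)"

definition bip_comparable :: "bip \<Rightarrow> bip \<Rightarrow> bool" where
  "bip_comparable x y \<longleftrightarrow> bip_le x y \<or> bip_le y x"

definition bip_convex :: "bip set \<Rightarrow> bool" where
  "bip_convex I \<longleftrightarrow> (\<forall>p q r. p \<in> I \<and> q \<in> I \<and> bip_le p r \<and> bip_le r q \<longrightarrow> r \<in> I)"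

definition bip_connected :: "bip set \<Rightarrow> bool" where
  "bip_connected I \<longleftrightarrow> (\<forall>p\<in>I. \<forall>q\<in>I. \<exists>xs. xs \<noteq> [] \<and> hd xs = p \<and> last xs = q \<and>
      set xs \<subseteq> I \<and> (\<forall>i. Suc i < length xs \<longrightarrow> bip_comparable (xs ! i) (xs ! Suc i)))"

definition bip_interval :: "bip set \<Rightarrow> bool" where
  "bip_interval I \<longleftrightarrow> I \<noteq> {} \<and> bip_convex I \<and> bip_connected I"

definition Lset :: "bip set set" where
  "Lset = {I. bip_interval I \<and> I \<noteq> UNIV \<and> NegInf \<in> I}"

definition Rset :: "bip set set" where
  "Rset = {I. bip_interval I \<and> I \<noteq> UNIV \<and> PosInf \<in> I}"

text \<open>A B-persistence module over the field 'k: vector spaces V x, realised as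
  subspaces of an ambient 'k-vector space 'v (scalar multiplication sc),
  and linear structure maps M x y for x <= y, functorial.\<close>

definition lin_on :: "('k \<Rightarrow> 'v::ab_group_add \<Rightarrow> 'v) \<Rightarrow> ('k \<Rightarrow> 'w \<Rightarrow> 'w) \<Rightarrow> 'v set \<Rightarrow> 'w set
    \<Rightarrow> ('v \<Rightarrow> 'w::ab_group_add) \<Rightarrow> bool" where
  "lin_on sc sc' V W f \<longleftrightarrow> (\<forall>v\<in>V. f v \<in> W) \<and>
     (\<forall>u\<in>V. \<forall>v\<in>V. f (u + v) = f u + f v) \<and>
     (\<forall>a. \<forall>v\<in>V. f (sc a v) = sc' a (f v))"

definition subspace_of :: "('k::field \<Rightarrow> 'v \<Rightarrow> 'v) \<Rightarrow> 'v::ab_group_add set \<Rightarrow> bool" where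
  "subspace_of sc V \<longleftrightarrow> 0 \<in> V \<and> (\<forall>u\<in>V. \<forall>v\<in>V. u + v \<in> V) \<and> (\<forall>a. \<forall>v\<in>V. sc a v \<in> V)"

definition pers_module :: "('k::field \<Rightarrow> 'v \<Rightarrow> 'v) \<Rightarrow> (bip \<Rightarrow> 'v::ab_group_add set)
    \<Rightarrow> (bip \<Rightarrow> bip \<Rightarrow> 'v \<Rightarrow> 'v) \<Rightarrow> bool" where
  "pers_module sc V M \<longleftrightarrow> Vector_Spaces.vector_space sc \<and>
     (\<forall>x. subspace_of sc (V x)) \<and>
     (\<forall>x y. bip_le x y \<longrightarrow> lin_on sc sc (V x) (V y) (M x y)) \<and>
     (\<forall>x. \<forall>v\<in>V x. M x x v = v) \<and>
     (\<forall>x y z. bip_le x y \<longrightarrow> bip_le y z \<longrightarrow> (\<forall>v\<in>V x. M x z v = M y z (M x y v)))"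

definition nat_trans :: "('k::field \<Rightarrow> 'v \<Rightarrow> 'v) \<Rightarrow> (bip \<Rightarrow> 'v::ab_group_add set) \<Rightarrow> (bip \<Rightarrow> bip \<Rightarrow> 'v \<Rightarrow> 'v)
    \<Rightarrow> ('k \<Rightarrow> 'w \<Rightarrow> 'w) \<Rightarrow> (bip \<Rightarrow> 'w::ab_group_add set) \<Rightarrow> (bip \<Rightarrow> bip \<Rightarrow> 'w \<Rightarrow> 'w)
    \<Rightarrow> (bip \<Rightarrow> 'v \<Rightarrow> 'w) \<Rightarrow> bool" where
  "nat_trans sc V M sc' W N f \<longleftrightarrow>
     (\<forall>x. lin_on sc sc' (V x) (W x) (f x)) \<and>
     (\<forall>x y. bip_le x y \<longrightarrow> (\<forall>v\<in>V x. f y (M x y v) = N x y (f x v)))"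

definition hom_nonzero :: "('k::field \<Rightarrow> 'v \<Rightarrow> 'v) \<Rightarrow> (bip \<Rightarrow> 'v::ab_group_add set) \<Rightarrow> (bip \<Rightarrow> bip \<Rightarrow> 'v \<Rightarrow> 'v)
    \<Rightarrow> ('k \<Rightarrow> 'w \<Rightarrow> 'w) \<Rightarrow> (bip \<Rightarrow> 'w::ab_group_add set) \<Rightarrow> (bip \<Rightarrow> bip \<Rightarrow> 'w \<Rightarrow> 'w) \<Rightarrow> bool" where
  "hom_nonzero sc V M sc' W N \<longleftrightarrow>
     (\<exists>f. nat_trans sc V M sc' W N f \<and> (\<exists>x. \<exists>v\<in>V x. f x v \<noteq> 0))"

definition int_space :: "bip set \<Rightarrow> bip \<Rightarrow> 'k::field set" where
  "int_space I x = (if x \<in> I then UNIV else {0})"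

definition int_map :: "bip set \<Rightarrow> bip \<Rightarrow> bip \<Rightarrow> 'k::field \<Rightarrow> 'k" where
  "int_map I x y = (if x \<in> I \<and> y \<in> I then id else (\<lambda>_. 0))"

definition Hom_int_nonzero :: "'k::field itself \<Rightarrow> bip set \<Rightarrow> bip set \<Rightarrow> bool" where
  "Hom_int_nonzero _ I J \<longleftrightarrow>
     hom_nonzero ((*) :: 'k \<Rightarrow> 'k \<Rightarrow> 'k) (int_space I) (int_map I) (*) (int_space J) (int_map J)"

end

theory Submission
  imports Defs
begin

text \<open>A natural transformation \<open>f : k\<^sub>I \<rightarrow> k\<^sub>J\<close> can only be nonzero on \<open>I \<inter> J\<close>, and
  naturality transports a nonzero component \<open>f\<^sub>a\<close> upwards along \<open>a \<le> b\<close> into \<open>J\<close>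
  (forcing \<open>b \<in> I\<close>) and downwards into \<open>I\<close> (forcing \<open>a \<in> J\<close>). For \<open>I, J \<in> \<L>\<close> a nonzero
  component is first moved down to \<open>-\<infinity>\<close> and from there up to every point of \<open>J\<close>, so
  \<open>J \<subseteq> I\<close>; for \<open>\<R>\<close> one moves up to \<open>+\<infinity>\<close> and then down to every point of \<open>I\<close>.
  Conversely, when \<open>J \<subseteq> I\<close> with \<open>J\<close> down-closed (resp. \<open>I \<subseteq> J\<close> with \<open>I\<close> up-closed), the
  identity on \<open>I \<inter> J\<close> extended by zero is natural.\<close>

abbreviation int_nat_trans :: "bip set \<Rightarrow> bip set \<Rightarrow> (bip \<Rightarrow> 'k::field \<Rightarrow> 'k) \<Rightarrow> bool" where
  "int_nat_trans I J f \<equiv> nat_trans (*) (int_space I) (int_map I) (*) (int_space J) (int_map J) f"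

lemma bip_le_NegInf [simp]: "bip_le NegInf x"
  and bip_le_PosInf [simp]: "bip_le x PosInf"
  by (auto simp: bip_le_def)

lemma bip_convex_down_closed:
  assumes "bip_convex I" "NegInf \<in> I" "bip_le x y" "y \<in> I"
  shows "x \<in> I"
  using assms unfolding bip_convex_def by (meson bip_le_NegInf)

lemma bip_convex_up_closed:
  assumes "bip_convex I" "PosInf \<in> I" "bip_le x y" "x \<in> I"
  shows "y \<in> I"
  using assms unfolding bip_convex_def by (meson bip_le_PosInf)

lemma lin_on_zero:
  assumes "lin_on sc sc' V W g" "(0::'v::ab_group_add) \<in> V"
  shows "g 0 = (0::'w::ab_group_add)"
proof -
  have "g (0 + 0) = g 0 + g 0" using assms unfolding lin_on_def by blast
  then show ?thesis by simp
qed

lemma int_nat_trans_zero: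
  assumes "int_nat_trans I J f"
  shows "f x 0 = 0"
proof (rule lin_on_zero)
  show "lin_on (*) (*) (int_space I x) (int_space J x) (f x)"
    using assms unfolding nat_trans_def by blast
qed (simp add: int_space_def)

lemma int_nat_trans_support:
  assumes "int_nat_trans I J f" "v \<in> int_space I x" "f x v \<noteq> 0"
  shows "x \<in> I" "x \<in> J"
proof -
  show "x \<in> I"
  proof (rule ccontr)
    assume "x \<notin> I"
    then have "v = 0" using assms(2) by (simp add: int_space_def)
    then show False using assms(3) int_nat_trans_zero[OF assms(1)] by simp
  qed
  have "f x v \<in> int_space J x"
    using assms(1,2) unfolding nat_trans_def lin_on_def by blast
  then show "x \<in> J"
    using assms(3) by (auto simp: int_space_def split: if_splits)
qed

lemma int_nat_trans_natural:
  assumes "int_nat_trans I J f" "bip_le a b" "a \<in> I"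
  shows "f b (int_map I a b v) = int_map J a b (f a v)"
  using assms unfolding nat_trans_def by (simp add: int_space_def)

lemma int_nat_trans_nonzero_up:
  assumes f: "int_nat_trans I J f" and v: "v \<in> int_space I a" "f a v \<noteq> 0"
    and "bip_le a b" "b \<in> J"
  shows "b \<in> I" "f b v \<noteq> 0"
proof -
  have "a \<in> I" "a \<in> J" using int_nat_trans_support[OF f v] by auto
  then have natural: "f b (int_map I a b v) = f a v"
    using int_nat_trans_natural[OF f assms(4) \<open>a \<in> I\<close>, of v] assms(5)
    by (simp add: int_map_def)
  show "b \<in> I"
  proof (rule ccontr)
    assume "b \<notin> I"
    then show False using natural v(2) int_nat_trans_zero[OF f] by (simp add: int_map_def)
  qed
  with \<open>a \<in> I\<close> natural v(2) show "f b v \<noteq> 0" by (simp add: int_map_def)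
qed

lemma int_nat_trans_nonzero_down:
  assumes f: "int_nat_trans I J f" and v: "v \<in> int_space I b" "f b v \<noteq> 0"
    and "bip_le a b" "a \<in> I"
  shows "a \<in> J" "f a v \<noteq> 0"
proof -
  have "b \<in> I" "b \<in> J" using int_nat_trans_support[OF f v] by auto
  then have natural: "int_map J a b (f a v) = f b v"
    using int_nat_trans_natural[OF f assms(4,5), of v] assms(5) by (simp add: int_map_def)
  show "a \<in> J"
  proof (rule ccontr)
    assume "a \<notin> J"
    then show False using natural v(2) by (simp add: int_map_def)
  qed
  with \<open>b \<in> J\<close> natural v(2) show "f a v \<noteq> 0" by (simp add: int_map_def)
qed

lemma Hom_int_nonzeroE:
  assumes "Hom_int_nonzero TYPE('k::field) I J"
  obtains f :: "bip \<Rightarrow> 'k::field \<Rightarrow> 'k" and x and v :: 'k where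
    "int_nat_trans I J f" "v \<in> int_space I x" "f x v \<noteq> 0"
  using assms unfolding Hom_int_nonzero_def hom_nonzero_def by blast

lemma Hom_int_nonzero_restrict_id:
  assumes "c \<in> I" "c \<in> J"
    and down: "\<And>x y. bip_le x y \<Longrightarrow> x \<in> I \<Longrightarrow> y \<in> I \<Longrightarrow> y \<in> J \<Longrightarrow> x \<in> J"
    and up: "\<And>x y. bip_le x y \<Longrightarrow> x \<in> I \<Longrightarrow> x \<in> J \<Longrightarrow> y \<in> J \<Longrightarrow> y \<in> I"
  shows "Hom_int_nonzero TYPE('k::field) I J"
proof -
  define f :: "bip \<Rightarrow> 'k \<Rightarrow> 'k" where "f = (\<lambda>x v. if x \<in> I \<and> x \<in> J then v else 0)"
  have "lin_on (*) (*) (int_space I x) (int_space J x) (f x)" for x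
    unfolding lin_on_def f_def int_space_def by simp
  moreover have "f y (int_map I x y v) = int_map J x y (f x v)"
    if "bip_le x y" "v \<in> int_space I x" for x y v
  proof (cases "x \<in> I")
    case True
    then show ?thesis using down[OF that(1)] up[OF that(1)] by (auto simp: f_def int_map_def)
  next
    case False
    then show ?thesis using that(2) by (simp add: f_def int_map_def int_space_def)
  qed
  ultimately have "int_nat_trans I J f"
    unfolding nat_trans_def by blast
  moreover have "(1::'k) \<in> int_space I c" "f c 1 \<noteq> 0"
    using assms(1,2) by (simp_all add: int_space_def f_def)
  ultimately show ?thesis
    unfolding Hom_int_nonzero_def hom_nonzero_def by blast
qed

lemma Hom_int_nonzero_NegInf_iff:
  assumes "NegInf \<in> I" "NegInf \<in> J" "bip_convex J"
  shows "Hom_int_nonzero TYPE('k::field) I J \<longleftrightarrow> J \<subseteq> I"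
proof
  assume "Hom_int_nonzero TYPE('k) I J"
  then obtain f :: "bip \<Rightarrow> 'k \<Rightarrow> 'k" and x v
    where f: "int_nat_trans I J f" and v: "v \<in> int_space I x" "f x v \<noteq> 0"
    by (rule Hom_int_nonzeroE)
  have "f NegInf v \<noteq> 0"
    using int_nat_trans_nonzero_down[OF f v] assms(1) by simp
  moreover have "v \<in> int_space I NegInf"
    using assms(1) by (simp add: int_space_def)
  ultimately show "J \<subseteq> I"
    using int_nat_trans_nonzero_up[OF f] by auto
next
  assume "J \<subseteq> I"
  then show "Hom_int_nonzero TYPE('k) I J"
    using assms bip_convex_down_closed by (intro Hom_int_nonzero_restrict_id) blast+
qed

lemma Hom_int_nonzero_PosInf_iff:
  assumes "PosInf \<in> I" "PosInf \<in> J" "bip_convex I"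
  shows "Hom_int_nonzero TYPE('k::field) I J \<longleftrightarrow> I \<subseteq> J"
proof
  assume "Hom_int_nonzero TYPE('k) I J"
  then obtain f :: "bip \<Rightarrow> 'k \<Rightarrow> 'k" and x v
    where f: "int_nat_trans I J f" and v: "v \<in> int_space I x" "f x v \<noteq> 0"
    by (rule Hom_int_nonzeroE)
  have "f PosInf v \<noteq> 0"
    using int_nat_trans_nonzero_up[OF f v] assms(2) by simp
  moreover have "v \<in> int_space I PosInf"
    using assms(1) by (simp add: int_space_def)
  ultimately show "I \<subseteq> J"
    using int_nat_trans_nonzero_down[OF f] by auto
next
  assume "I \<subseteq> J"
  then show "Hom_int_nonzero TYPE('k) I J"
    using assms bip_convex_up_closed by (intro Hom_int_nonzero_restrict_id) blast+
qed

theorem lemma4p7: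
  fixes I J :: "bip set"
  assumes "bip_interval I" and "bip_interval J"
  shows "(I \<in> Lset \<and> J \<in> Lset \<longrightarrow> (Hom_int_nonzero TYPE('k::field) I J \<longleftrightarrow> J \<subseteq> I)) \<and>
         (I \<in> Rset \<and> J \<in> Rset \<longrightarrow> (Hom_int_nonzero TYPE('k::field) I J \<longleftrightarrow> I \<subseteq> J))"
proof (intro conjI impI)
  assume "I \<in> Lset \<and> J \<in> Lset"
  then show "Hom_int_nonzero TYPE('k) I J \<longleftrightarrow> J \<subseteq> I"
    using assms(2) by (intro Hom_int_nonzero_NegInf_iff) (auto simp: Lset_def bip_interval_def)
next
  assume "I \<in> Rset \<and> J \<in> Rset"
  then show "Hom_int_nonzero TYPE('k) I J \<longleftrightarrow> I \<subseteq> J"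
    using assms(1) by (intro Hom_int_nonzero_PosInf_iff) (auto simp: Rset_def bip_interval_def)
qed

end
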